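(* Let $D=(V,A)$ be a digraph with minimum in-degree at least 1, and let $\mathcal{L}D=\mathcal{L}_{(A',\phi)}D$ be a partial line digraph of $D$. Then the number of semikernels of $D$ is less than or equal to the number of semikernels of $\mathcal{L}D$; more precisely, the map $K\mapsto\omega^-(K)\cap A'$ sends semikernels of $D$ injectively to semikernels of $\mathcal{L}D$.
   Context: Digraphs are loopless and without multiple arcs. For $U\subseteq V$, $\omega^-(U)=\{(x,y)\in A: y\in U,\ x\notin U\}$ and $\omega^+(U)=\{(x,y)\in A: x\in U,\ y\notin U\}$; for a vertex $j$, $\omega^-(j)$ is the set of arcs with terminal vertex $j$. For a set of arcs $\Omega$, $H(\Omega)=\{y:(x,y)\in\Omega\}$. The arc $(x,y)$ is also written $xy$. Partial line digraph: given $D=(V,A)$ with minimum in-degree at least 1, take an arc subset $A'\subseteq A$ and a surjective map $\phi:A\to A'$ such that (i) $H(A')=V$; (ii) $\phi$ restricted to $A'$ is the identity, and for every vertex $j\in V$, $\phi(\omega^-(j))\subseteq\omega^-(j)\cap A'$. The partial line digraph $\mathcal{L}_{(A',\phi)}D$ has vertex set $A'$ and arc set $\{(ij,\phi(j,k)) : ij\in A',\ (j,k)\in A\}$. A semikernel of a digraph is an independent vertex set $S$ (no arc joins two vertices of $S$) such that for every arc $(s,x)\in\omega^+(S)$ there is an arc $(x,s')\in\omega^-(S)$. *)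

theory Defs
  imports Main
begin

text \<open>A digraph is a finite vertex set V with an arc set A of ordered pairs
  (no multiple arcs by construction) that is loopless.\<close>
definition digraph :: "'a set \<Rightarrow> ('a \<times> 'a) set \<Rightarrow> bool" where
  "digraph V A \<longleftrightarrow> finite V \<and> A \<subseteq> V \<times> V \<and> (\<forall>(x,y)\<in>A. x \<noteq> y)"

definition min_indeg_ge1 :: "'a set \<Rightarrow> ('a \<times> 'a) set \<Rightarrow> bool" where
  "min_indeg_ge1 V A \<longleftrightarrow> (\<forall>j\<in>V. \<exists>x. (x, j) \<in> A)"

definition in_cut :: "('a \<times> 'a) set \<Rightarrow> 'a set \<Rightarrow> ('a \<times> 'a) set" where
  "in_cut A U = {(x,y) \<in> A. y \<in> U \<and> x \<notin> U}"

definition out_cut :: "('a \<times> 'a) set \<Rightarrow> 'a set \<Rightarrow> ('a \<times> 'a) set" where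
  "out_cut A U = {(x,y) \<in> A. x \<in> U \<and> y \<notin> U}"

definition in_arcs :: "('a \<times> 'a) set \<Rightarrow> 'a \<Rightarrow> ('a \<times> 'a) set" where
  "in_arcs A j = {(x,y) \<in> A. y = j}"

definition heads :: "('a \<times> 'a) set \<Rightarrow> 'a set" where
  "heads \<Omega> = {y. \<exists>x. (x,y) \<in> \<Omega>}"

definition is_pld :: "'a set \<Rightarrow> ('a \<times> 'a) set \<Rightarrow> ('a \<times> 'a) set
    \<Rightarrow> (('a \<times> 'a) \<Rightarrow> ('a \<times> 'a)) \<Rightarrow> bool" where
  "is_pld V A A' \<phi> \<longleftrightarrow> A' \<subseteq> A \<and> \<phi> ` A = A' \<and> heads A' = V
     \<and> (\<forall>a\<in>A'. \<phi> a = a)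
     \<and> (\<forall>j\<in>V. \<phi> ` in_arcs A j \<subseteq> in_arcs A j \<inter> A')"

text \<open>Arc set of the partial line digraph (its vertex set is A').\<close>
definition pld_arcs :: "('a \<times> 'a) set \<Rightarrow> ('a \<times> 'a) set
    \<Rightarrow> (('a \<times> 'a) \<Rightarrow> ('a \<times> 'a)) \<Rightarrow> (('a \<times> 'a) \<times> ('a \<times> 'a)) set" where
  "pld_arcs A A' \<phi> = {((i,j), \<phi> (j,k)) | i j k. (i,j) \<in> A' \<and> (j,k) \<in> A}"

definition independent :: "'a set \<Rightarrow> ('a \<times> 'a) set \<Rightarrow> 'a set \<Rightarrow> bool" where
  "independent V A S \<longleftrightarrow> S \<subseteq> V \<and> (\<forall>x\<in>S. \<forall>y\<in>S. (x,y) \<notin> A)"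

definition semikernel :: "'a set \<Rightarrow> ('a \<times> 'a) set \<Rightarrow> 'a set \<Rightarrow> bool" where
  "semikernel V A S \<longleftrightarrow> independent V A S \<and>
     (\<forall>(s,x) \<in> out_cut A S. \<exists>s'. (x, s') \<in> in_cut A S)"

end

theory Submission
  imports Defs
begin

text \<open>An arc of \<open>\<omega>\<^sup>-(K) \<inter> A'\<close> is determined by its head in \<open>K\<close>, and every vertex is the
  head of some arc of \<open>A'\<close>, so \<open>K\<close> is recovered as the set of heads and the map is injective.
  For semikernel-ness, an arc \<open>((i,j), \<phi>(j,k))\<close> of the partial line digraph leaving
  \<open>\<omega>\<^sup>-(K) \<inter> A'\<close> comes from an arc \<open>(j,k)\<close> of \<open>D\<close> leaving \<open>K\<close>; the arc \<open>(k,s')\<close> back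
  into \<open>K\<close> provided by the semikernel property yields the arc \<open>(\<phi>(j,k), \<phi>(k,s'))\<close> back
  into \<open>\<omega>\<^sup>-(K) \<inter> A'\<close>, because \<open>\<phi>\<close> preserves heads.\<close>

lemma semikernel_iff:
  "semikernel V A S \<longleftrightarrow> S \<subseteq> V \<and> (\<forall>x\<in>S. \<forall>y\<in>S. (x, y) \<notin> A)
     \<and> (\<forall>s x. (s, x) \<in> A \<longrightarrow> s \<in> S \<longrightarrow> x \<notin> S \<longrightarrow> (\<exists>s'\<in>S. (x, s') \<in> A))"
  unfolding semikernel_def independent_def out_cut_def in_cut_def by blast

lemma in_cut_independent:
  assumes "independent V A K"
  shows "in_cut A K = {(x, y) \<in> A. y \<in> K}"
  using assms unfolding independent_def in_cut_def by auto

lemma in_cut_semikernel_inter: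
  assumes "semikernel V A K" and "A' \<subseteq> A"
  shows "in_cut A K \<inter> A' = {(x, y) \<in> A'. y \<in> K}"
  using assms in_cut_independent unfolding semikernel_def by blast

lemma is_pld_image_arc:
  assumes "is_pld V A A' \<phi>" and "(j, k) \<in> A" and "k \<in> V"
  obtains i where "\<phi> (j, k) = (i, k)" and "(i, k) \<in> A'"
proof -
  have "\<phi> ` in_arcs A k \<subseteq> in_arcs A k \<inter> A'"
    using assms(1,3) unfolding is_pld_def by blast
  moreover have "(j, k) \<in> in_arcs A k"
    using assms(2) unfolding in_arcs_def by blast
  ultimately have "\<phi> (j, k) \<in> in_arcs A k \<inter> A'" by blast
  then show thesis using that unfolding in_arcs_def by auto
qed

lemma heads_arcs_into:
  assumes "K \<subseteq> heads B"
  shows "heads {(x, y) \<in> B. y \<in> K} = K"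
  using assms unfolding heads_def by auto

lemma semikernel_pld:
  assumes pld: "is_pld V A A' \<phi>" and AV: "A \<subseteq> V \<times> V" and sk: "semikernel V A K"
  shows "semikernel A' (pld_arcs A A' \<phi>) {(x, y) \<in> A'. y \<in> K}"
    (is "semikernel A' ?L ?S")
proof -
  have indep: "(x, y) \<notin> A" if "x \<in> K" "y \<in> K" for x y
    using sk that unfolding semikernel_iff by blast
  have absorb: "\<exists>s'\<in>K. (x, s') \<in> A" if "(s, x) \<in> A" "s \<in> K" "x \<notin> K" for s x
    using sk that unfolding semikernel_iff by blast
  have image_arc: "\<exists>i. \<phi> (j, k) = (i, k) \<and> (i, k) \<in> A'" if "(j, k) \<in> A" for j k
    using is_pld_image_arc[OF pld that] that AV by blast
  have "(a, b) \<notin> ?L" if "a \<in> ?S" "b \<in> ?S" for a b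
  proof
    assume "(a, b) \<in> ?L"
    then obtain i j k where "a = (i, j)" "b = \<phi> (j, k)" "(j, k) \<in> A"
      unfolding pld_arcs_def by blast
    with that image_arc show False using indep by fastforce
  qed
  moreover have "\<exists>c\<in>?S. (b, c) \<in> ?L" if "(a, b) \<in> ?L" "a \<in> ?S" "b \<notin> ?S" for a b
  proof -
    from that(1,2) obtain i j k where a: "a = (i, j)" "j \<in> K"
      and b: "b = \<phi> (j, k)" and jk: "(j, k) \<in> A"
      unfolding pld_arcs_def by blast
    from image_arc[OF jk] b obtain i' where b': "b = (i', k)" "(i', k) \<in> A'" by blast
    with that(3) have "k \<notin> K" by blast
    with absorb jk a obtain s' where s': "s' \<in> K" "(k, s') \<in> A" by blast
    from image_arc[OF s'(2)] s'(1) have "\<phi> (k, s') \<in> ?S" by auto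
    moreover have "(b, \<phi> (k, s')) \<in> ?L"
      unfolding pld_arcs_def using b' s'(2) by blast
    ultimately show ?thesis by (rule bexI[rotated])
  qed
  ultimately show ?thesis
    unfolding semikernel_iff by blast
qed

theorem theorem2p6:
  fixes V :: "'a set" and A A' :: "('a \<times> 'a) set"
    and \<phi> :: "('a \<times> 'a) \<Rightarrow> ('a \<times> 'a)"
  assumes "digraph V A" and "min_indeg_ge1 V A" and "is_pld V A A' \<phi>"
  shows "(\<forall>K. semikernel V A K \<longrightarrow> semikernel A' (pld_arcs A A' \<phi>) (in_cut A K \<inter> A'))
       \<and> inj_on (\<lambda>K. in_cut A K \<inter> A') {K. semikernel V A K}
       \<and> card {K. semikernel V A K} \<le> card {S. semikernel A' (pld_arcs A A' \<phi>) S}"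
proof -
  have AV: "A \<subseteq> V \<times> V" and "finite V"
    using assms(1) unfolding digraph_def by auto
  have A'A: "A' \<subseteq> A" using assms(3) unfolding is_pld_def by blast
  have image: "\<forall>K. semikernel V A K \<longrightarrow> semikernel A' (pld_arcs A A' \<phi>) (in_cut A K \<inter> A')"
    using semikernel_pld[OF assms(3) AV] in_cut_semikernel_inter[OF _ A'A] by simp
  have inj: "inj_on (\<lambda>K. in_cut A K \<inter> A') {K. semikernel V A K}"
  proof (rule inj_on_inverseI)
    fix K assume "K \<in> {K. semikernel V A K}"
    then have "semikernel V A K" and "K \<subseteq> heads A'"
      using assms(3) unfolding semikernel_def independent_def is_pld_def by auto
    then show "heads (in_cut A K \<inter> A') = K"
      using in_cut_semikernel_inter[OF _ A'A] heads_arcs_into by simp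
  qed
  have "finite A'" using A'A AV \<open>finite V\<close> by (meson finite_SigmaI finite_subset)
  then have "finite {S. semikernel A' (pld_arcs A A' \<phi>) S}"
    by (auto intro: finite_subset[of _ "Pow A'"] simp: semikernel_def independent_def)
  with inj image have "card {K. semikernel V A K} \<le> card {S. semikernel A' (pld_arcs A A' \<phi>) S}"
    by (intro card_inj_on_le) auto
  with image inj show ?thesis by blast
qed

end
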